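(* Let $k$ be an odd integer with $k\ge 5$, let $D$ be a strong $k$-quasi-transitive digraph with $\mathrm{diam}(D)\ge k+2$, let $u,v\in V(D)$ with $d(u,v)=k+2$, and let $P=x_0x_1\ldots x_{k+2}$ be a shortest $(u,v)$-path with $x_0=u$, $x_{k+2}=v$. Let $O(P)=\{x_1,x_3,\ldots,x_{k+2}\}$ and $E(P)=\{x_0,x_2,\ldots,x_{k+1}\}$. If there exist two distinct vertices $x_i,x_j$ both in $E(P)$ or both in $O(P)$ that are adjacent, then $D[V(P)]$ is a semicomplete digraph and $x_s\rightarrow x_t$ for all indices $0\le t$, $s\le k+2$ with $1\le t+1<s$.
   Context: All digraphs are finite, without loops or multiple arcs (opposite arcs allowed). $x\rightarrow y$ means $xy\in A(D)$; $x,y$ are adjacent if $x\rightarrow y$ or $y\rightarrow x$. For $k\ge 2$, $D$ is $k$-quasi-transitive if for every path $x_0x_1\ldots x_k$ of length $k$, $x_0$ and $x_k$ are adjacent. $d(x,y)$ is the length of a shortest $(x,y)$-path, $\mathrm{diam}(D)=\max_{x,y}d(x,y)$. $D[S]$ is the induced subdigraph. A semicomplete digraph is one in which every two distinct vertices are adjacent. *)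

theory Defs
  imports Main
begin

definition digraph :: "'a set \<Rightarrow> ('a \<times> 'a) set \<Rightarrow> bool" where
  "digraph V A \<longleftrightarrow> finite V \<and> A \<subseteq> V \<times> V \<and> (\<forall>x. (x, x) \<notin> A)"

definition adj :: "('a \<times> 'a) set \<Rightarrow> 'a \<Rightarrow> 'a \<Rightarrow> bool" where
  "adj A x y \<longleftrightarrow> (x, y) \<in> A \<or> (y, x) \<in> A"

text \<open>A (directed) path is a nonempty list of distinct vertices with consecutive arcs;
its length is the number of arcs, i.e. length xs - 1.\<close>

definition is_path :: "'a set \<Rightarrow> ('a \<times> 'a) set \<Rightarrow> 'a list \<Rightarrow> bool" where
  "is_path V A xs \<longleftrightarrow> xs \<noteq> [] \<and> distinct xs \<and> set xs \<subseteq> V \<and>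
     (\<forall>i. Suc i < length xs \<longrightarrow> (xs ! i, xs ! Suc i) \<in> A)"

definition k_quasi_transitive :: "'a set \<Rightarrow> ('a \<times> 'a) set \<Rightarrow> nat \<Rightarrow> bool" where
  "k_quasi_transitive V A k \<longleftrightarrow>
     (\<forall>xs. is_path V A xs \<and> length xs = k + 1 \<longrightarrow> adj A (hd xs) (last xs))"

definition strong :: "'a set \<Rightarrow> ('a \<times> 'a) set \<Rightarrow> bool" where
  "strong V A \<longleftrightarrow>
     (\<forall>x\<in>V. \<forall>y\<in>V. \<exists>xs. is_path V A xs \<and> hd xs = x \<and> last xs = y)"

definition dist :: "'a set \<Rightarrow> ('a \<times> 'a) set \<Rightarrow> 'a \<Rightarrow> 'a \<Rightarrow> nat" where
  "dist V A x y = (LEAST n. \<exists>xs. is_path V A xs \<and> hd xs = x \<and> last xs = y \<and> length xs = Suc n)"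

definition diam :: "'a set \<Rightarrow> ('a \<times> 'a) set \<Rightarrow> nat" where
  "diam V A = Max {dist V A x y | x y. x \<in> V \<and> y \<in> V}"

definition semicomplete :: "'a set \<Rightarrow> ('a \<times> 'a) set \<Rightarrow> bool" where
  "semicomplete V A \<longleftrightarrow> (\<forall>x\<in>V. \<forall>y\<in>V. x \<noteq> y \<longrightarrow> adj A x y)"

definition induced_arcs :: "('a \<times> 'a) set \<Rightarrow> 'a set \<Rightarrow> ('a \<times> 'a) set" where
  "induced_arcs A S = A \<inter> (S \<times> S)"

end

theory Submission
  imports Defs
begin

(* Write x_i for P ! i.  As P is a shortest path, an arc between x_a and x_b with
   |a - b| >= 2 must point backwards.  Climbing P through runs of consecutive vertices and
   jumping down along known backward arcs produces paths with exactly k arcs, whose ends are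
   adjacent by k-quasi-transitivity and hence joined by a new backward arc.  Starting from
   x_k -> x_0, x_(k+1) -> x_1 and x_(k+2) -> x_2, this gives every backward arc of odd span at
   least 3.  A chord between indices of equal parity then forces x_(k+1) -> x_0 (even indices)
   or x_(k+2) -> x_1 (odd indices); each of these implies the other, and together they yield
   every backward arc x_s -> x_t with s >= t + 2. *)

lemma is_path_iff_successively:
  "is_path V A xs \<longleftrightarrow>
     xs \<noteq> [] \<and> distinct xs \<and> set xs \<subseteq> V \<and> successively (\<lambda>x y. (x, y) \<in> A) xs"
  by (simp add: is_path_def successively_conv_nth)

lemma successively_upt: "successively (\<lambda>i j. j = Suc i) [a..<b]"
  by (simp add: successively_conv_nth)

lemma is_path_map_nth:
  assumes "is_path V A P" and "L \<noteq> []" and "distinct L" and "set L \<subseteq> {..<length P}"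
    and "successively (\<lambda>i j. j = Suc i \<or> (P ! i, P ! j) \<in> A) L"
  shows "is_path V A (map ((!) P) L)"
proof -
  have P: "distinct P" "set P \<subseteq> V" "successively (\<lambda>x y. (x, y) \<in> A) P"
    using assms(1) by (simp_all add: is_path_iff_successively)
  have "distinct (map ((!) P) L)"
    using assms(3,4) P(1) by (auto simp: distinct_map intro: inj_on_subset[OF inj_on_nth])
  moreover have "set (map ((!) P) L) \<subseteq> V"
    using assms(4) P(2) nth_mem by fastforce
  moreover have "successively (\<lambda>i j. (P ! i, P ! j) \<in> A) L"
    using assms(5) by (rule successively_mono)
      (use assms(4) successively_nth[OF P(3)] in fastforce)
  ultimately show ?thesis
    using assms(2) by (simp add: is_path_iff_successively successively_map)
qed

lemma shortest_path_no_forward_chord: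
  assumes "is_path V A P" and "dist V A (hd P) (last P) = length P - 1"
    and "a + 1 < b" and "b < length P"
  shows "(P ! a, P ! b) \<notin> A"
proof
  assume chord: "(P ! a, P ! b) \<in> A"
  let ?L = "[0..<Suc a] @ [b..<length P]"
  have "successively (\<lambda>i j. j = Suc i \<or> (P ! i, P ! j) \<in> A) [m..<n]" for m n
    by (rule successively_mono[OF successively_upt]) simp
  then have "successively (\<lambda>i j. j = Suc i \<or> (P ! i, P ! j) \<in> A) ?L"
    using chord assms(3,4) by (simp add: successively_append_iff del: upt_Suc)
  then have "is_path V A (map ((!) P) ?L)"
    using assms by (intro is_path_map_nth) auto
  moreover have "hd P = P ! 0" "last P = P ! (length P - 1)"
    using assms(4) hd_conv_nth[of P] last_conv_nth[of P] by fastforce+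
  then have "hd (map ((!) P) ?L) = hd P" "last (map ((!) P) ?L) = last P"
    using assms(4) by (auto simp: hd_map last_map last_append simp del: upt_Suc)
  ultimately have "dist V A (hd P) (last P) \<le> a + (length P - b)"
    unfolding dist_def using assms(3,4) by (intro Least_le) (rule exI[of _ "map ((!) P) ?L"], simp)
  then show False
    using assms(2,3,4) by linarith
qed

lemma semicomplete_if_back_arcs:
  assumes "is_path V A P" and "\<And>s t. s < length P \<Longrightarrow> t + 1 < s \<Longrightarrow> (P ! s, P ! t) \<in> A"
  shows "semicomplete (set P) (induced_arcs A (set P))"
  unfolding semicomplete_def induced_arcs_def adj_def
proof (intro ballI impI)
  fix x y assume "x \<in> set P" "y \<in> set P" "x \<noteq> y"
  then obtain p q where pq: "p < length P" "q < length P" "x = P ! p" "y = P ! q" "p \<noteq> q"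
    by (metis in_set_conv_nth)
  have step: "(P ! i, P ! Suc i) \<in> A" if "Suc i < length P" for i
    using assms(1) that by (simp add: is_path_def)
  have "q = Suc p \<or> p = Suc q \<or> q + 1 < p \<or> p + 1 < q"
    using pq(5) by linarith
  then have "(x, y) \<in> A \<or> (y, x) \<in> A"
    using pq step[of p] step[of q] assms(2)[of p q] assms(2)[of q p] by auto
  then show "(x, y) \<in> A \<inter> set P \<times> set P \<or> (y, x) \<in> A \<inter> set P \<times> set P"
    using \<open>x \<in> set P\<close> \<open>y \<in> set P\<close> by blast
qed

fun blocks :: "(nat \<times> nat) list \<Rightarrow> nat list" where
  "blocks [] = []"
| "blocks ((a, b) # bs) = [a..<Suc b] @ blocks bs"

fun linked_blocks :: "(nat \<Rightarrow> nat \<Rightarrow> bool) \<Rightarrow> (nat \<times> nat) list \<Rightarrow> bool" where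
  "linked_blocks R [] \<longleftrightarrow> False"
| "linked_blocks R [(a, b)] \<longleftrightarrow> a \<le> b"
| "linked_blocks R ((a, b) # (c, d) # bs) \<longleftrightarrow>
     a \<le> b \<and> d < a \<and> R b c \<and> linked_blocks R ((c, d) # bs)"

declare upt_Suc [simp del]

lemma linked_blocks_le_snd_hd:
  "linked_blocks R bs \<Longrightarrow> i \<in> set (blocks bs) \<Longrightarrow> i \<le> snd (hd bs)"
  by (induction R bs rule: linked_blocks.induct) fastforce+

lemma linked_blocks_hd:
  "linked_blocks R bs \<Longrightarrow> blocks bs \<noteq> [] \<and> hd (blocks bs) = fst (hd bs)"
  by (induction R bs rule: linked_blocks.induct) auto

lemma linked_blocks_last:
  "linked_blocks R bs \<Longrightarrow> last (blocks bs) = snd (last bs)"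
  by (induction R bs rule: linked_blocks.induct) (auto simp: last_append dest: linked_blocks_hd)

lemma distinct_blocks: "linked_blocks R bs \<Longrightarrow> distinct (blocks bs)"
  by (induction R bs rule: linked_blocks.induct) (fastforce dest: linked_blocks_le_snd_hd)+

lemma successively_blocks:
  "linked_blocks R bs \<Longrightarrow> successively (\<lambda>i j. j = Suc i \<or> R i j) (blocks bs)"
proof (induction R bs rule: linked_blocks.induct)
  case (3 R a b c d bs)
  then show ?case
    using linked_blocks_hd[of R "(c, d) # bs"]
    by (auto simp: successively_append_iff intro: successively_mono[OF successively_upt])
qed (auto intro: successively_mono[OF successively_upt])

locale shortest_kqt_path =
  fixes V :: "'a set" and A :: "('a \<times> 'a) set" and k :: nat and P :: "'a list"
  assumes path: "is_path V A P" and length_P: "length P = k + 3"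
    and shortest: "dist V A (hd P) (last P) = k + 2"
    and kqt: "k_quasi_transitive V A k"
    and odd_k: "odd k" and k_ge_5: "5 \<le> k"
begin

definition arc :: "nat \<Rightarrow> nat \<Rightarrow> bool" where
  "arc s t \<longleftrightarrow> (P ! s, P ! t) \<in> A"

lemma no_forward_arc: "a + 1 < b \<Longrightarrow> b \<le> k + 2 \<Longrightarrow> \<not> arc a b"
  unfolding arc_def using shortest_path_no_forward_chord[OF path] shortest length_P by simp

lemma arc_if_adj: "adj A (P ! s) (P ! t) \<Longrightarrow> t + 2 \<le> s \<Longrightarrow> s \<le> k + 2 \<Longrightarrow> arc s t"
  using no_forward_arc[of t s] unfolding adj_def arc_def by auto

lemma adj_ends_of_index_walk:
  assumes "distinct L" and "set L \<subseteq> {..k + 2}" and "length L = k + 1"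
    and "successively (\<lambda>i j. j = Suc i \<or> arc i j) L"
  shows "adj A (P ! hd L) (P ! last L)"
proof -
  have "L \<noteq> []" using assms(3) by auto
  moreover have "set L \<subseteq> {..<length P}" using assms(2) length_P by auto
  then have "is_path V A (map ((!) P) L)"
    using is_path_map_nth[OF path \<open>L \<noteq> []\<close> assms(1)] assms(4) unfolding arc_def by blast
  ultimately show ?thesis
    using kqt assms(3) unfolding k_quasi_transitive_def by (auto simp: hd_map last_map)
qed

text \<open>Walking up each block along P and jumping down along known arcs gives a path of
  length k in D, so its ends are adjacent; as P is shortest, the arc between them points back.\<close>

lemma arc_of_linked_blocks:
  assumes "linked_blocks arc bs" and "length (blocks bs) = k + 1" and "snd (hd bs) \<le> k + 2"
    and "fst (hd bs) = s" and "snd (last bs) = t" and "t + 2 \<le> s"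
  shows "arc s t"
proof (rule arc_if_adj)
  have bounded: "set (blocks bs) \<subseteq> {..k + 2}"
    using linked_blocks_le_snd_hd[OF assms(1)] assms(3) by fastforce
  then show "adj A (P ! s) (P ! t)"
    using adj_ends_of_index_walk[of "blocks bs"] assms
    by (simp add: distinct_blocks successively_blocks linked_blocks_hd linked_blocks_last)
  show "s \<le> k + 2"
    using bounded linked_blocks_hd[OF assms(1)] assms(4) hd_in_set by fastforce
qed (fact assms(6))

lemma arc_span_k: "t \<le> 2 \<Longrightarrow> arc (k + t) t"
proof -
  assume "t \<le> 2"
  have "adj A (P ! hd [t..<Suc (k + t)]) (P ! last [t..<Suc (k + t)])"
    using \<open>t \<le> 2\<close> by (intro adj_ends_of_index_walk) (auto intro: successively_mono[OF successively_upt])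
  then show ?thesis
    using \<open>t \<le> 2\<close> k_ge_5 by (intro arc_if_adj) (auto simp: adj_def)
qed

lemma arc_last_first: "arc (k + 2) 0"
  by (rule arc_of_linked_blocks[where bs="[(k+2,k+2),(2,k),(0,0)]"])
    (use k_ge_5 arc_span_k[of 0] arc_span_k[of 2] in auto)

lemma arc_span_3: "t + 3 \<le> k + 2 \<Longrightarrow> arc (t + 3) t"
  by (rule arc_of_linked_blocks[where bs="[(t+3,k+2),(0,t)]"]) (use arc_last_first in auto)

lemma arc_from_last_descend:
  assumes "arc (k + 2) x" and "1 \<le> y" and "y \<le> x" and "x \<le> k" and "even (x - y)"
  shows "arc (k + 2) y"
proof -
  obtain m where "x = y + 2 * m"
    using assms(3,5) by (metis dvd_def le_add_diff_inverse)
  with assms(1,2,4) show ?thesis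
  proof (induction m arbitrary: y)
    case (Suc m)
    then have "arc (k + 2) (y + 2)"
      using Suc.IH[of "y + 2"] by simp
    then show ?case
      by (intro arc_of_linked_blocks[where bs="[(k+2,k+2),(y+2,k+1),(1,y)]"])
        (use Suc.prems arc_span_k[of 1] in auto)
  qed simp
qed

lemma arc_to_first_ascend:
  assumes "arc z 0" and "2 \<le> z" and "z \<le> y" and "y \<le> k + 1" and "even (y - z)"
  shows "arc y 0"
proof -
  obtain m where "y = z + 2 * m"
    using assms(3,5) by (metis dvd_def le_add_diff_inverse)
  with assms(4) show ?thesis
  proof (induction m arbitrary: y)
    case 0
    then show ?case using assms(1) by simp
  next
    case (Suc m)
    then have "arc (z + 2 * m) 0"
      using Suc.IH[of "z + 2 * m"] by simp
    then show ?case
      by (intro arc_of_linked_blocks[where bs="[(z+2*m+2,k+1),(1,z+2*m),(0,0)]"])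
        (use Suc.prems assms(2) arc_span_k[of 1] in auto)
  qed
qed

lemma arc_from_last_even: "even x \<Longrightarrow> x + 3 \<le> k + 2 \<Longrightarrow> arc (k + 2) x"
proof (cases "x = 0")
  case False
  assume "even x" "x + 3 \<le> k + 2"
  moreover have "arc (k + 2) (k - 1)"
    using arc_span_3[of "k - 1"] k_ge_5 by simp
  moreover have "even (k - 1 - x)"
    using \<open>even x\<close> \<open>x + 3 \<le> k + 2\<close> odd_k by presburger
  ultimately show ?thesis
    using arc_from_last_descend[of "k - 1" x] False by simp
qed (use arc_last_first in simp)

lemma arc_to_first_odd: "odd y \<Longrightarrow> 3 \<le> y \<Longrightarrow> y \<le> k + 2 \<Longrightarrow> arc y 0"
proof (cases "y = k + 2")
  case False
  assume "odd y" "3 \<le> y" "y \<le> k + 2"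
  moreover have "arc 3 0"
    using arc_span_3[of 0] k_ge_5 by simp
  moreover have "even (y - 3)"
    using \<open>odd y\<close> \<open>3 \<le> y\<close> by presburger
  ultimately show ?thesis
    using arc_to_first_ascend[of 3 y] False by simp
qed (use arc_last_first in simp)

lemma arc_odd_span_odd_head:
  assumes "odd t" and "t + 3 \<le> s" and "s \<le> k + 2" and "odd (s - t)"
  shows "arc s t"
proof (cases "s = t + 3")
  case True
  then show ?thesis using arc_span_3[of t] assms by simp
next
  case False
  then have "t + 5 \<le> s"
    using assms by presburger
  moreover have "arc (k + 2) (t + 1)"
    using arc_from_last_even[of "t + 1"] assms \<open>t + 5 \<le> s\<close> by simp
  moreover have "odd (s - 3)" and "3 \<le> s - 3"
    using assms \<open>t + 5 \<le> s\<close> by presburger+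
  then have "arc (s - 3) 0"
    using arc_to_first_odd[of "s - 3"] assms(3) by simp
  ultimately show ?thesis
    by (intro arc_of_linked_blocks[where bs="[(s,k+2),(t+1,s-3),(0,t)]"]) (use assms in auto)
qed

lemma arc_odd_span:
  assumes "t + 3 \<le> s" and "s \<le> k + 2" and "odd (s - t)"
  shows "arc s t"
proof -
  consider "odd t" | "t = 0" | "s = k + 2" | "s = t + 3"
    | "even t" "t \<noteq> 0" "s \<noteq> k + 2" "s \<noteq> t + 3"
    by blast
  then show ?thesis
  proof cases
    case 1
    then show ?thesis using arc_odd_span_odd_head assms by blast
  next
    case 2
    then show ?thesis using arc_to_first_odd[of s] assms by simp
  next
    case 3
    then have "even t"
      using assms odd_k by presburger
    then show ?thesis using arc_from_last_even[of t] 3 assms by simp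
  next
    case 4
    then show ?thesis using arc_span_3[of t] assms by simp
  next
    case 5
    then have bounds: "t + 5 \<le> s" "s \<le> k" "2 \<le> t"
      using assms odd_k by presburger+
    have "arc (k + 1) (t + 1)"
      by (rule arc_odd_span_odd_head) (use 5 bounds assms odd_k in presburger)+
    moreover have "arc (s - 1) 1"
      by (rule arc_odd_span_odd_head) (use 5 bounds assms in presburger)+
    ultimately show ?thesis
      by (intro arc_of_linked_blocks[where bs="[(s,k+1),(t+1,s-1),(1,t)]"]) (use bounds in auto)
  qed
qed

lemma arc_penult_first_if_even_chord:
  assumes chord: "arc j i" and "i + 2 \<le> j" and "j \<le> k + 2" and "even i" and "even j"
  shows "arc (k + 1) 0"
proof -
  have j_cases: "j \<le> k - 1 \<or> j = k + 1"
    using assms(3,5) odd_k by presburger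
  have "\<exists>y. even y \<and> 2 \<le> y \<and> y \<le> k + 1 \<and> arc y 0"
  proof -
    have "i = 0 \<or> i = 2 \<or> 4 \<le> i"
      using \<open>even i\<close> by presburger
    then consider "i = 0" | "i = 2" | "4 \<le> i"
      by blast
    then show ?thesis
    proof cases
      case 1
      then show ?thesis using chord assms(2,5) j_cases by (intro exI[of _ j]) auto
    next
      case 2
      show ?thesis using j_cases
      proof
        assume j: "j \<le> k - 1"
        have "arc (k + 2) 4" by (rule arc_odd_span) (use k_ge_5 odd_k in presburger)+
        moreover have "arc 3 0" using arc_span_3[of 0] k_ge_5 by simp
        ultimately have "arc (j + 2) 0"
          by (intro arc_of_linked_blocks[where bs="[(j+2,k+2),(4,j),(2,3),(0,0)]"])
            (use chord 2 assms(2,3) j k_ge_5 in auto)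
        then show ?thesis using assms j by (intro exI[of _ "j + 2"]) auto
      next
        assume j: "j = k + 1"
        have "arc (k + 1) 0"
          by (intro arc_of_linked_blocks[where bs="[(k+1,k+1),(2,k),(0,0)]"])
            (use arc_span_k[of 0] chord 2 j k_ge_5 in auto)
        then show ?thesis using odd_k k_ge_5 by (intro exI[of _ "k + 1"]) auto
      qed
    next
      case 3
      have "arc (i + 1) 2" by (rule arc_odd_span) (use 3 assms(2-5) in presburger)+
      moreover have "arc (i - 1) 0" by (rule arc_odd_span) (use 3 assms(2-5) in presburger)+
      ultimately show ?thesis using j_cases
      proof (elim disjE)
        assume j: "j \<le> k - 1" and "arc (i + 1) 2" "arc (i - 1) 0"
        moreover have "arc (k + 2) (i + 2)"
          by (rule arc_odd_span) (use 3 assms(2-5) j odd_k in presburger)+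
        ultimately have "arc (j + 2) 0"
          by (intro arc_of_linked_blocks[where bs="[(j+2,k+2),(i+2,j),(i,i+1),(2,i-1),(0,0)]"])
            (use chord 3 assms(2,3) j k_ge_5 in auto)
        then show ?thesis using assms j by (intro exI[of _ "j + 2"]) auto
      next
        assume j: "j = k + 1" and "arc (i + 1) 2" "arc (i - 1) 0"
        moreover have "arc k 2" by (rule arc_odd_span) (use k_ge_5 odd_k in presburger)+
        ultimately have "arc (k + 1) 0"
          by (intro arc_of_linked_blocks[where bs="[(k+1,k+1),(i,k),(2,i-1),(0,0)]"])
            (use chord 3 assms(2,3) j k_ge_5 in auto)
        then show ?thesis using odd_k k_ge_5 by (intro exI[of _ "k + 1"]) auto
      qed
    qed
  qed
  then obtain y where "even y" "2 \<le> y" "y \<le> k + 1" "arc y 0"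
    by blast
  moreover have "even (k + 1 - y)"
    using \<open>even y\<close> \<open>y \<le> k + 1\<close> odd_k by presburger
  ultimately show ?thesis
    using arc_to_first_ascend[of y "k + 1"] by simp
qed

lemma arc_last_second_if_odd_chord:
  assumes chord: "arc j i" and "i + 2 \<le> j" and "j \<le> k + 2" and "odd i" and "odd j"
  shows "arc (k + 2) 1"
proof -
  have arc_k_2: "arc k 2"
    by (rule arc_odd_span) (use k_ge_5 odd_k in presburger)+
  have "\<exists>x. odd x \<and> x \<le> k \<and> arc (k + 2) x"
  proof -
    have "j = k + 2 \<or> j \<le> k - 2 \<or> j = k" and "i = 1 \<or> 3 \<le> i"
      using assms(3-5) odd_k by presburger+
    then consider "j = k + 2" | "i = 1" "j \<le> k - 2" | "i = 1" "j = k"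
      | "3 \<le> i" "j \<le> k - 2" | "3 \<le> i" "j = k"
      by blast
    then show ?thesis
    proof cases
      case 1
      then show ?thesis using assms by (intro exI[of _ i]) auto
    next
      case 2
      have "arc (k + 2) (j + 1)"
        by (rule arc_odd_span) (use 2 assms(2-5) odd_k in presburger)+
      then have "arc (k + 2) 1"
        by (intro arc_of_linked_blocks[where bs="[(k+2,k+2),(j+1,k),(2,j),(1,1)]"])
          (use arc_k_2 chord 2 assms(2,3) k_ge_5 in auto)
      then show ?thesis using k_ge_5 by (intro exI[of _ 1]) auto
    next
      case 3
      have "arc (k + 2) 1"
        by (intro arc_of_linked_blocks[where bs="[(k+2,k+2),(2,k),(1,1)]"])
          (use arc_span_k[of 2] chord 3 k_ge_5 in auto)
      then show ?thesis using k_ge_5 by (intro exI[of _ 1]) auto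
    next
      case 4
      have "arc (k + 2) (j + 1)" and "arc k (j - 1)" and "arc (j - 2) 0"
        by (rule arc_odd_span; use 4 assms(2-5) odd_k in presburger)+
      then have "arc (k + 2) (i - 2)"
        by (intro arc_of_linked_blocks[where bs="[(k+2,k+2),(j+1,k),(j-1,j),(i,j-2),(0,i-2)]"])
          (use chord 4 assms(2,3) k_ge_5 in auto)
      then show ?thesis using 4 assms by (intro exI[of _ "i - 2"]) auto
    next
      case 5
      have "arc (k + 2) (k - 1)"
        using arc_span_3[of "k - 1"] k_ge_5 by simp
      moreover have "arc (k - 2) 0"
        by (rule arc_odd_span) (use k_ge_5 odd_k in presburger)+
      ultimately have "arc (k + 2) (i - 2)"
        by (intro arc_of_linked_blocks[where bs="[(k+2,k+2),(k-1,k),(i,k-2),(0,i-2)]"])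
          (use chord 5 assms(2,3) k_ge_5 in auto)
      then show ?thesis using 5 assms by (intro exI[of _ "i - 2"]) auto
    qed
  qed
  then obtain x where "odd x" "x \<le> k" "arc (k + 2) x"
    by blast
  moreover have "even (x - 1)" "1 \<le> x"
    using \<open>odd x\<close> by presburger+
  ultimately show ?thesis
    using arc_from_last_descend[of x 1] by simp
qed

lemma arc_to_first_if_penult_first:
  assumes "arc (k + 1) 0" and "2 \<le> y" and "y \<le> k + 2"
  shows "arc y 0"
proof (cases "even y")
  case True
  have "arc 2 0"
    by (intro arc_of_linked_blocks[where bs="[(2,k+1),(0,0)]"]) (use assms(1) k_ge_5 in auto)
  moreover have "y \<le> k + 1" "even (y - 2)"
    using True assms(2,3) odd_k by presburger+
  ultimately show ?thesis
    using arc_to_first_ascend[of 2 y] assms(2) by simp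
next
  case False
  then have "3 \<le> y"
    using assms(2) by presburger
  then show ?thesis
    using arc_to_first_odd[of y] False assms(3) by simp
qed

lemma arc_from_last_if_last_second:
  assumes "arc (k + 2) 1" and "x \<le> k"
  shows "arc (k + 2) x"
proof (cases "even x")
  case True
  then have "x + 3 \<le> k + 2"
    using assms(2) odd_k by presburger
  then show ?thesis
    using arc_from_last_even[of x] True by simp
next
  case False
  have "arc (k + 2) k"
    by (intro arc_of_linked_blocks[where bs="[(k+2,k+2),(1,k)]"]) (use assms(1) k_ge_5 in auto)
  moreover have "even (k - x)" "1 \<le> x"
    using False odd_k by presburger+
  ultimately show ?thesis
    using arc_from_last_descend[of k x] assms(2) by simp
qed

lemma arc_penult_first_iff_last_second: "arc (k + 1) 0 \<longleftrightarrow> arc (k + 2) 1"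
proof
  assume "arc (k + 1) 0"
  then have "arc (k - 1) 0"
    using arc_to_first_if_penult_first[of "k - 1"] k_ge_5 by simp
  then show "arc (k + 2) 1"
    by (intro arc_of_linked_blocks[where bs="[(k+2,k+2),(2,k-1),(0,1)]"])
      (use arc_span_k[of 2] k_ge_5 in auto)
next
  assume "arc (k + 2) 1"
  then have "arc (k + 2) 3"
    using arc_from_last_if_last_second[of 3] k_ge_5 by simp
  then show "arc (k + 1) 0"
    by (intro arc_of_linked_blocks[where bs="[(k+1,k+2),(3,k),(0,0)]"])
      (use arc_span_k[of 0] k_ge_5 in auto)
qed

lemma all_back_arcs_if_penult_first:
  assumes "arc (k + 1) 0" and "t + 2 \<le> s" and "s \<le> k + 2"
  shows "arc s t"
proof -
  have last_second: "arc (k + 2) 1"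
    using assms(1) arc_penult_first_iff_last_second by blast
  consider "t = 0" | "s = k + 2" | "s = t + 2" "t \<noteq> 0" "s \<noteq> k + 2" | "s = t + 3"
    | "t + 4 \<le> s" "t \<noteq> 0" "s \<noteq> k + 2"
    using assms(2) by linarith
  then show ?thesis
  proof cases
    case 1
    then show ?thesis using arc_to_first_if_penult_first assms by simp
  next
    case 2
    then show ?thesis using arc_from_last_if_last_second[OF last_second, of t] assms by simp
  next
    case 3
    then show ?thesis
      by (intro arc_of_linked_blocks[where bs="[(s,k+2),(1,t)]"])
        (use last_second assms k_ge_5 in auto)
  next
    case 4
    then show ?thesis using arc_span_3[of t] assms by simp
  next
    case 5
    have "arc (k + 2) (t + 1)"
      using arc_from_last_if_last_second[OF last_second, of "t + 1"] 5 assms by simp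
    moreover have "arc (s - 3) 0"
      using arc_to_first_if_penult_first[OF assms(1), of "s - 3"] 5 assms by simp
    ultimately show ?thesis
      by (intro arc_of_linked_blocks[where bs="[(s,k+2),(t+1,s-3),(0,t)]"])
        (use 5 assms k_ge_5 in auto)
  qed
qed

lemma all_back_arcs_if_same_parity_chord:
  assumes "adj A (P ! i) (P ! j)" and "i \<noteq> j" and "even i \<longleftrightarrow> even j"
    and "i \<le> k + 2" and "j \<le> k + 2" and "t + 2 \<le> s" and "s \<le> k + 2"
  shows "arc s t"
proof -
  define a b where "a = max i j" and "b = min i j"
  have ab: "b + 2 \<le> a" "a \<le> k + 2" "even a \<longleftrightarrow> even b"
    using assms(2-5) unfolding a_def b_def by presburger+
  have "adj A (P ! a) (P ! b)"
    using assms(1) unfolding a_def b_def adj_def by (cases "i \<le> j") auto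
  then have "arc a b"
    using arc_if_adj ab by blast
  then have "arc (k + 1) 0"
    using arc_penult_first_if_even_chord[of a b] arc_last_second_if_odd_chord[of a b]
      arc_penult_first_iff_last_second ab by blast
  then show ?thesis
    using all_back_arcs_if_penult_first assms(6,7) by blast
qed

end

theorem lemma2p4:
  fixes V :: "'a set" and A :: "('a \<times> 'a) set" and k :: nat
    and u v :: 'a and P :: "'a list"
  assumes "odd k" and "k \<ge> 5"
    and "digraph V A" and "strong V A" and "k_quasi_transitive V A k"
    and "diam V A \<ge> k + 2"
    and "u \<in> V" and "v \<in> V" and "dist V A u v = k + 2"
    and "is_path V A P" and "length P = k + 3" and "hd P = u" and "last P = v"
    and "\<exists>i j. i \<le> k + 2 \<and> j \<le> k + 2 \<and> i \<noteq> j \<and> (even i \<longleftrightarrow> even j)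
               \<and> adj A (P ! i) (P ! j)"
  shows "semicomplete (set P) (induced_arcs A (set P)) \<and>
         (\<forall>s t. s \<le> k + 2 \<and> t + 1 < s \<longrightarrow> (P ! s, P ! t) \<in> A)"
proof -
  interpret shortest_kqt_path V A k P
    using assms(1,2,5,9-13) by unfold_locales auto
  obtain i j where "i \<le> k + 2" "j \<le> k + 2" "i \<noteq> j" "even i \<longleftrightarrow> even j" "adj A (P ! i) (P ! j)"
    using assms(14) by blast
  then have back_arcs: "(P ! s, P ! t) \<in> A" if "s \<le> k + 2" "t + 1 < s" for s t
    using all_back_arcs_if_same_parity_chord[of i j t s] that unfolding arc_def by auto
  show ?thesis
    using semicomplete_if_back_arcs[OF assms(10)] back_arcs assms(11) by auto
qed

end
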